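(* Let $G$ be a connected weighted graph and $d$ a positive integer. Up to isomorphism over $G$, there are finitely many unramified harmonic morphisms $\varphi:G'\to G$ of degree $d$ from connected weighted graphs $G'$.
   Context: A graph $G$ consists of a finite set $X(G)$, an idempotent root map $r:X(G)\to X(G)$ and an involution $\iota:X(G)\to X(G)$ fixing $r(X(G))$ pointwise. $V(G)=r(X(G))$ are the vertices, $H(G)=X(G)\setminus V(G)$ the half-edges; $\iota$-orbits of size 2 in $H(G)$ are edges, fixed points are legs. $T_vG=\{h\in H(G): r(h)=v\}$, $\mathrm{val}(v)=\#T_vG$. A weighted graph has $g:V(G)\to\mathbb{Z}_{\ge0}$; $\chi(v)=2-2g(v)-\mathrm{val}(v)$. A morphism $\varphi:G'\to G$ is a map $X(G')\to X(G)$ commuting with $r$ and $\iota$ sending each edge to an edge or a vertex. It is harmonic if equipped with $d_\varphi:X(G')\to\mathbb{Z}_{\ge0}$ such that $d_\varphi$ agrees on the two halves of an edge, $d_\varphi(h')=0$ iff $\varphi(h')$ is a vertex, and for each $v'\in V(G')$ and each $h\in T_{\varphi(v')}G$, $d_\varphi(v')=\sum_{h'\in T_{v'}G',\varphi(h')=h}d_\varphi(h')$. Its degree is $\sum_{\varphi(v')=v}d_\varphi(v')$ (independent of $v$ for connected $G$). It is finite if $d_\varphi>0$ on all half-edges, and unramified if it is finite and $d_\varphi(v')\chi(\varphi(v'))-\chi(v')=0$ for all $v'\in V(G')$. *)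

theory Defs
  imports Main
begin

text \<open>A graph: set X(G) with root map r and involution iota. A weighted graph
additionally carries a genus function (only its values on vertices matter).\<close>

record 'a graph =
  X :: "'a set"
  r :: "'a \<Rightarrow> 'a"
  iota :: "'a \<Rightarrow> 'a"

record 'a wgraph = "'a graph" +
  genus :: "'a \<Rightarrow> nat"

definition is_graph :: "('a, 'z) graph_scheme \<Rightarrow> bool" where
  "is_graph G \<longleftrightarrow> finite (X G) \<and>
     (\<forall>x\<in>X G. r G x \<in> X G \<and> r G (r G x) = r G x \<and>
               iota G x \<in> X G \<and> iota G (iota G x) = x \<and>
               iota G (r G x) = r G x)"

definition V :: "('a, 'z) graph_scheme \<Rightarrow> 'a set" where
  "V G = r G ` X G"

definition H :: "('a, 'z) graph_scheme \<Rightarrow> 'a set" where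
  "H G = X G - V G"

definition T :: "('a, 'z) graph_scheme \<Rightarrow> 'a \<Rightarrow> 'a set" where
  "T G v = {h \<in> H G. r G h = v}"

definition val :: "('a, 'z) graph_scheme \<Rightarrow> 'a \<Rightarrow> nat" where
  "val G v = card (T G v)"

definition chi :: "('a, 'z) wgraph_scheme \<Rightarrow> 'a \<Rightarrow> int" where
  "chi G v = 2 - 2 * int (genus G v) - int (val G v)"

definition adj :: "('a, 'z) graph_scheme \<Rightarrow> ('a \<times> 'a) set" where
  "adj G = {(r G h, r G (iota G h)) | h. h \<in> H G \<and> iota G h \<noteq> h}"

definition connected :: "('a, 'z) graph_scheme \<Rightarrow> bool" where
  "connected G \<longleftrightarrow> V G \<noteq> {} \<and> (\<forall>v\<in>V G. \<forall>w\<in>V G. (v, w) \<in> (adj G)\<^sup>*)"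

definition morphism :: "('b, 'y) graph_scheme \<Rightarrow> ('a, 'z) graph_scheme \<Rightarrow> ('b \<Rightarrow> 'a) \<Rightarrow> bool" where
  "morphism G' G \<phi> \<longleftrightarrow>
     (\<forall>x\<in>X G'. \<phi> x \<in> X G \<and> \<phi> (r G' x) = r G (\<phi> x) \<and> \<phi> (iota G' x) = iota G (\<phi> x)) \<and>
     (\<forall>h\<in>H G'. iota G' h \<noteq> h \<longrightarrow> \<phi> h \<in> V G \<or> iota G (\<phi> h) \<noteq> \<phi> h)"

definition harmonic :: "('b, 'y) graph_scheme \<Rightarrow> ('a, 'z) graph_scheme \<Rightarrow> ('b \<Rightarrow> 'a) \<Rightarrow> ('b \<Rightarrow> nat) \<Rightarrow> bool" where
  "harmonic G' G \<phi> d \<longleftrightarrow> morphism G' G \<phi> \<and>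
     (\<forall>h\<in>H G'. d (iota G' h) = d h) \<and>
     (\<forall>h\<in>H G'. d h = 0 \<longleftrightarrow> \<phi> h \<in> V G) \<and>
     (\<forall>v\<in>V G'. \<forall>h\<in>T G (\<phi> v). d v = (\<Sum>h'\<in>{h'\<in>T G' v. \<phi> h' = h}. d h'))"

text \<open>Degree (for connected G the sum is independent of v; we require it for every v).\<close>
definition has_degree :: "('b, 'y) graph_scheme \<Rightarrow> ('a, 'z) graph_scheme \<Rightarrow> ('b \<Rightarrow> 'a) \<Rightarrow> ('b \<Rightarrow> nat) \<Rightarrow> nat \<Rightarrow> bool" where
  "has_degree G' G \<phi> d n \<longleftrightarrow> (\<forall>v\<in>V G. (\<Sum>v'\<in>{v'\<in>V G'. \<phi> v' = v}. d v') = n)"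

definition finite_morph :: "('b, 'y) graph_scheme \<Rightarrow> ('b \<Rightarrow> nat) \<Rightarrow> bool" where
  "finite_morph G' d \<longleftrightarrow> (\<forall>h\<in>H G'. d h > 0)"

definition unramified :: "('b, 'y) wgraph_scheme \<Rightarrow> ('a, 'z) wgraph_scheme \<Rightarrow> ('b \<Rightarrow> 'a) \<Rightarrow> ('b \<Rightarrow> nat) \<Rightarrow> bool" where
  "unramified G' G \<phi> d \<longleftrightarrow> finite_morph G' d \<and>
     (\<forall>v'\<in>V G'. int (d v') * chi G (\<phi> v') - chi G' v' = 0)"

definition iso_over :: "('b, 'y) wgraph_scheme \<Rightarrow> ('b \<Rightarrow> 'a) \<Rightarrow> ('b \<Rightarrow> nat) \<Rightarrow>
                        ('c, 'x) wgraph_scheme \<Rightarrow> ('c \<Rightarrow> 'a) \<Rightarrow> ('c \<Rightarrow> nat) \<Rightarrow> bool" where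
  "iso_over G1 \<phi>1 d1 G2 \<phi>2 d2 \<longleftrightarrow> (\<exists>\<psi>. bij_betw \<psi> (X G1) (X G2) \<and>
     (\<forall>x\<in>X G1. \<psi> (r G1 x) = r G2 (\<psi> x) \<and> \<psi> (iota G1 x) = iota G2 (\<psi> x) \<and>
                \<phi>2 (\<psi> x) = \<phi>1 x \<and> d2 (\<psi> x) = d1 x) \<and>
     (\<forall>v\<in>V G1. genus G2 (\<psi> v) = genus G1 v))"

end

theory Submission
  imports Defs
begin

text \<open>For an unramified harmonic morphism of degree d onto G, every vertex of G' has positive
  local degree (by connectedness, a vertex without half-edges is all of G'), so each fibre
  over a vertex of G has at most d vertices, and each vertex of G' has at most d half-edges over
  each half-edge of G. The unramified condition d(v') chi(phi v') = chi(v') then bounds the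
  genera of G'. Enumerating X(G'), the morphism is thus determined up to isomorphism over G by
  a list of bounded length with entries in a fixed finite set.\<close>

lemma finite_representatives:
  assumes "finite C"
    and "\<And>t. P t \<Longrightarrow> f t \<in> C"
    and "\<And>s t. P s \<Longrightarrow> P t \<Longrightarrow> f s = f t \<Longrightarrow> R s t"
  shows "\<exists>S. finite S \<and> (\<forall>t. P t \<longrightarrow> (\<exists>s\<in>S. R t s))"
proof (intro exI conjI allI impI)
  define rep where "rep c = (SOME s. P s \<and> f s = c)" for c
  show "finite (rep ` C)" using \<open>finite C\<close> by simp
  fix t assume t: "P t"
  have "P (rep (f t)) \<and> f (rep (f t)) = f t"
    unfolding rep_def by (rule someI[where x = t]) (simp add: t)
  then have "R t (rep (f t))" using t assms(3) by simp
  moreover have "rep (f t) \<in> rep ` C" using assms(2)[OF t] by simp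
  ultimately show "\<exists>s\<in>rep ` C. R t s" by blast
qed

lemma finite_representatives_triples:
  assumes "finite C"
    and "\<And>x y z. P x y z \<Longrightarrow> f x y z \<in> C"
    and "\<And>x y z x' y' z'. P x y z \<Longrightarrow> P x' y' z' \<Longrightarrow> f x y z = f x' y' z' \<Longrightarrow> R x y z x' y' z'"
  shows "\<exists>S. finite S \<and> (\<forall>x y z. P x y z \<longrightarrow> (\<exists>(x', y', z')\<in>S. R x y z x' y' z'))"
proof -
  have "\<exists>S. finite S \<and> (\<forall>t. (\<lambda>(x, y, z). P x y z) t \<longrightarrow>
          (\<exists>s\<in>S. (\<lambda>(x, y, z) (x', y', z'). R x y z x' y' z') t s))"
    by (rule finite_representatives[of C _ "\<lambda>(x, y, z). f x y z"])
      (use assms in \<open>auto split: prod.splits\<close>)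
  then show ?thesis by simp
qed

lemma card_le_sum_pos:
  fixes f :: "'a \<Rightarrow> nat"
  assumes "\<And>x. x \<in> A \<Longrightarrow> 0 < f x"
  shows "card A \<le> sum f A"
  using sum_bounded_below[of A 1 f] assms by (simp add: Suc_le_eq)

lemma is_graph_finite: "is_graph G \<Longrightarrow> finite (X G)"
  by (simp add: is_graph_def)

lemma V_subset_X: "is_graph G \<Longrightarrow> V G \<subseteq> X G"
  by (auto simp: is_graph_def V_def)

lemma r_in_X: "is_graph G \<Longrightarrow> x \<in> X G \<Longrightarrow> r G x \<in> X G"
  by (simp add: is_graph_def)

lemma iota_in_X: "is_graph G \<Longrightarrow> x \<in> X G \<Longrightarrow> iota G x \<in> X G"
  by (simp add: is_graph_def)

lemma r_in_V: "x \<in> X G \<Longrightarrow> r G x \<in> V G"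
  by (simp add: V_def)

lemma r_vertex: "is_graph G \<Longrightarrow> v \<in> V G \<Longrightarrow> r G v = v"
  by (auto simp: is_graph_def V_def)

lemma H_subset_X: "H G \<subseteq> X G"
  by (auto simp: H_def)

lemma root_in_V: "h \<in> H G \<Longrightarrow> r G h \<in> V G"
  by (simp add: H_def V_def)

lemma X_eq_V_Un_H: "is_graph G \<Longrightarrow> X G = V G \<union> H G"
  using V_subset_X by (auto simp: H_def)

lemma T_subset_H: "T G v \<subseteq> H G"
  by (auto simp: T_def)

lemma H_eq_UN_T: "H G = (\<Union>v\<in>V G. T G v)"
  using root_in_V by (auto simp: T_def)

lemma finite_V: "is_graph G \<Longrightarrow> finite (V G)"
  by (simp add: V_def is_graph_def)

lemma finite_H: "is_graph G \<Longrightarrow> finite (H G)"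
  by (simp add: H_def is_graph_def)

lemma finite_T: "is_graph G \<Longrightarrow> finite (T G v)"
  using finite_H T_subset_H by (rule finite_subset[rotated])

lemma val_le_card_H: "is_graph G \<Longrightarrow> val G v \<le> card (H G)"
  unfolding val_def by (intro card_mono finite_H T_subset_H)

lemma morphism_vertex:
  assumes "is_graph G'" "morphism G' G \<phi>" "v \<in> V G'"
  shows "\<phi> v \<in> V G"
proof -
  have vX: "v \<in> X G'" using V_subset_X[OF assms(1)] assms(3) by blast
  have rv: "r G' v = v" using r_vertex[OF assms(1,3)] .
  have "\<phi> v \<in> X G" "\<phi> (r G' v) = r G (\<phi> v)"
    using assms(2) vX by (simp_all add: morphism_def)
  then show ?thesis using rv r_in_V[of "\<phi> v" G] by simp
qed

subsection \<open>Encoding a morphism by a list\<close>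

definition enum_of :: "'b set \<Rightarrow> nat \<Rightarrow> 'b" where
  "enum_of A = (SOME e. bij_betw e {0..<card A} A)"

definition index_of :: "'b set \<Rightarrow> 'b \<Rightarrow> nat" where
  "index_of A = inv_into {0..<card A} (enum_of A)"

lemma bij_betw_enum_of: "finite A \<Longrightarrow> bij_betw (enum_of A) {0..<card A} A"
  unfolding enum_of_def by (rule someI_ex[OF ex_bij_betw_nat_finite])

lemma bij_betw_index_of: "finite A \<Longrightarrow> bij_betw (index_of A) A {0..<card A}"
  unfolding index_of_def by (intro bij_betw_inv_into bij_betw_enum_of)

lemma enum_of_index_of: "finite A \<Longrightarrow> x \<in> A \<Longrightarrow> enum_of A (index_of A x) = x"
  unfolding index_of_def by (meson bij_betw_enum_of bij_betw_inv_into_right)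

lemma index_of_less: "finite A \<Longrightarrow> x \<in> A \<Longrightarrow> index_of A x < card A"
  using bij_betw_index_of bij_betwE by fastforce

lemma enum_of_in: "finite A \<Longrightarrow> i < card A \<Longrightarrow> enum_of A i \<in> A"
  using bij_betw_enum_of bij_betwE by fastforce

text \<open>The genus entry of a half-edge is set to 0: genus is only meaningful on vertices,
  and iso_over compares it only there.\<close>

definition morphism_code ::
    "('b, 'y) wgraph_scheme \<Rightarrow> ('b \<Rightarrow> 'a) \<Rightarrow> ('b \<Rightarrow> nat) \<Rightarrow> (nat \<times> nat \<times> 'a \<times> nat \<times> nat) list" where
  "morphism_code G' \<phi> d\<phi> =
     map (\<lambda>x. (index_of (X G') (r G' x), index_of (X G') (iota G' x), \<phi> x, d\<phi> x,
               if x \<in> V G' then genus G' x else 0))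
       (map (enum_of (X G')) [0..<card (X G')])"

lemma length_morphism_code: "length (morphism_code G' \<phi> d\<phi>) = card (X G')"
  by (simp add: morphism_code_def)

lemma nth_morphism_code:
  "i < card (X G') \<Longrightarrow> morphism_code G' \<phi> d\<phi> ! i =
     (let x = enum_of (X G') i in
       (index_of (X G') (r G' x), index_of (X G') (iota G' x), \<phi> x, d\<phi> x,
        if x \<in> V G' then genus G' x else 0))"
  by (simp add: morphism_code_def Let_def)

lemma set_morphism_code:
  assumes "is_graph G'"
  shows "set (morphism_code G' \<phi> d\<phi>) \<subseteq>
    {0..<card (X G')} \<times> {0..<card (X G')} \<times> \<phi> ` X G' \<times> d\<phi> ` X G' \<times> insert 0 (genus G' ` V G')"
  using assms is_graph_finite index_of_less enum_of_in r_in_X iota_in_X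
  by (fastforce simp: morphism_code_def)

lemma morphism_code_eq_imp_iso_over:
  assumes G1: "is_graph G1" and G2: "is_graph G2"
    and code: "morphism_code G1 \<phi>1 d1 = morphism_code G2 \<phi>2 d2"
  shows "iso_over G1 \<phi>1 d1 G2 \<phi>2 d2"
proof -
  have fin1: "finite (X G1)" and fin2: "finite (X G2)" using G1 G2 by (simp_all add: is_graph_finite)
  define n where "n = card (X G1)"
  have n2: "card (X G2) = n"
    using arg_cong[OF code, of length] by (simp add: length_morphism_code n_def)
  define \<psi> where "\<psi> = enum_of (X G2) \<circ> index_of (X G1)"
  have bij: "bij_betw \<psi> (X G1) (X G2)"
    unfolding \<psi>_def
    using bij_betw_trans[OF bij_betw_index_of[OF fin1, folded n_def] bij_betw_enum_of[OF fin2, unfolded n2]] .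
  have entry: "index_of (X G1) (r G1 x) = index_of (X G2) (r G2 (\<psi> x)) \<and>
      index_of (X G1) (iota G1 x) = index_of (X G2) (iota G2 (\<psi> x)) \<and>
      \<phi>1 x = \<phi>2 (\<psi> x) \<and> d1 x = d2 (\<psi> x) \<and>
      (if x \<in> V G1 then genus G1 x else 0) = (if \<psi> x \<in> V G2 then genus G2 (\<psi> x) else 0)"
    if x: "x \<in> X G1" for x
  proof -
    define i where "i = index_of (X G1) x"
    have "i < n" using index_of_less[OF fin1 x] by (simp add: i_def n_def)
    moreover have "enum_of (X G1) i = x" using enum_of_index_of[OF fin1 x] by (simp add: i_def)
    moreover have "enum_of (X G2) i = \<psi> x" by (simp add: \<psi>_def i_def)
    ultimately show ?thesis
      using arg_cong[OF code, of "\<lambda>c. c ! i"] by (simp add: nth_morphism_code n2 n_def Let_def)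
  qed
  have \<psi>_apply: "\<psi> y = enum_of (X G2) (index_of (X G1) y)" for y
    by (simp add: \<psi>_def)
  have commute: "\<psi> (r G1 x) = r G2 (\<psi> x) \<and> \<psi> (iota G1 x) = iota G2 (\<psi> x) \<and>
      \<phi>2 (\<psi> x) = \<phi>1 x \<and> d2 (\<psi> x) = d1 x" if x: "x \<in> X G1" for x
  proof -
    have "\<psi> x \<in> X G2" using bij_betwE[OF bij] x by blast
    then show ?thesis
      using entry[OF x] enum_of_index_of[OF fin2] r_in_X[OF G2] iota_in_X[OF G2] by (simp add: \<psi>_apply)
  qed
  have "genus G2 (\<psi> v) = genus G1 v" if v: "v \<in> V G1" for v
  proof -
    have vX: "v \<in> X G1" using V_subset_X[OF G1] v by blast
    then have "\<psi> v \<in> X G2" using bij_betwE[OF bij] by blast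
    moreover have "r G2 (\<psi> v) = \<psi> v" using commute[OF vX] r_vertex[OF G1 v] by simp
    ultimately have "\<psi> v \<in> V G2" by (metis r_in_V)
    then show ?thesis using entry[OF vX] v by simp
  qed
  then show ?thesis unfolding iso_over_def using bij commute by blast
qed

subsection \<open>Harmonic morphisms\<close>

locale harmonic_morphism =
  fixes G' :: "('b, 'y) graph_scheme" and G :: "('a, 'z) graph_scheme"
    and \<phi> :: "'b \<Rightarrow> 'a" and d\<phi> :: "'b \<Rightarrow> nat"
  assumes source_graph: "is_graph G'" and target_graph: "is_graph G"
    and is_harmonic: "harmonic G' G \<phi> d\<phi>"
begin

lemma is_morphism: "morphism G' G \<phi>"
  using is_harmonic by (simp add: harmonic_def)

lemma degree_eq_0_iff: "h \<in> H G' \<Longrightarrow> d\<phi> h = 0 \<longleftrightarrow> \<phi> h \<in> V G"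
  using is_harmonic by (simp add: harmonic_def)

lemma vertex_image: "v \<in> V G' \<Longrightarrow> \<phi> v \<in> V G"
  by (rule morphism_vertex[OF source_graph is_morphism])

lemma half_edge_image:
  assumes h: "h \<in> H G'" and pos: "0 < d\<phi> h"
  shows "\<phi> h \<in> T G (\<phi> (r G' h))"
proof -
  have "h \<in> X G'" using h H_subset_X[of G'] by blast
  then have "\<phi> h \<in> X G" "r G (\<phi> h) = \<phi> (r G' h)"
    using is_morphism by (simp_all add: morphism_def)
  moreover have "\<phi> h \<notin> V G" using degree_eq_0_iff[OF h] pos by simp
  ultimately show ?thesis by (simp add: T_def H_def)
qed

lemma finite_T_fibre: "finite {h'\<in>T G' v. P h'}"
  by (rule finite_subset[of _ "T G' v"]) (auto simp: finite_T source_graph)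

lemma balancing:
  "v \<in> V G' \<Longrightarrow> h \<in> T G (\<phi> v) \<Longrightarrow> d\<phi> v = (\<Sum>h'\<in>{h'\<in>T G' v. \<phi> h' = h}. d\<phi> h')"
  using is_harmonic by (simp add: harmonic_def)

lemma half_edge_le_root:
  assumes h: "h \<in> H G'"
  shows "d\<phi> h \<le> d\<phi> (r G' h)"
proof (cases "d\<phi> h = 0")
  case False
  define v where "v = r G' h"
  have v: "v \<in> V G'" using root_in_V[OF h] by (simp add: v_def)
  have "d\<phi> h \<le> (\<Sum>h'\<in>{h'\<in>T G' v. \<phi> h' = \<phi> h}. d\<phi> h')"
    using h finite_T_fibre by (intro member_le_sum) (auto simp: T_def v_def)
  also have "\<dots> = d\<phi> v"
    using balancing[OF v] half_edge_image[OF h] False by (simp add: v_def)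
  finally show ?thesis by (simp add: v_def)
qed simp

lemma card_T_fibre_le:
  assumes "finite_morph G' d\<phi>" "v \<in> V G'" "h \<in> T G (\<phi> v)"
  shows "card {h'\<in>T G' v. \<phi> h' = h} \<le> d\<phi> v"
proof -
  have "card {h'\<in>T G' v. \<phi> h' = h} \<le> (\<Sum>h'\<in>{h'\<in>T G' v. \<phi> h' = h}. d\<phi> h')"
    using assms(1) by (intro card_le_sum_pos) (auto simp: finite_morph_def T_def)
  then show ?thesis using balancing[OF assms(2,3)] by simp
qed

lemma card_T_le:
  assumes fm: "finite_morph G' d\<phi>" and v: "v \<in> V G'"
  shows "card (T G' v) \<le> val G (\<phi> v) * d\<phi> v"
proof -
  have "T G' v = (\<Union>h\<in>T G (\<phi> v). {h'\<in>T G' v. \<phi> h' = h})"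
    using half_edge_image fm by (auto simp: finite_morph_def T_def)
  then have "card (T G' v) = card (\<Union>h\<in>T G (\<phi> v). {h'\<in>T G' v. \<phi> h' = h})"
    by (rule arg_cong)
  also have "\<dots> \<le> (\<Sum>h\<in>T G (\<phi> v). card {h'\<in>T G' v. \<phi> h' = h})"
    by (rule card_UN_le[OF finite_T[OF target_graph]])
  also have "\<dots> \<le> val G (\<phi> v) * d\<phi> v"
    using sum_bounded_above[of "T G (\<phi> v)" "\<lambda>h. card {h'\<in>T G' v. \<phi> h' = h}" "d\<phi> v"]
      card_T_fibre_le[OF fm v] by (simp add: val_def)
  finally show ?thesis .
qed

lemma vertex_le_degree:
  assumes "has_degree G' G \<phi> d\<phi> d" and v: "v \<in> V G'"
  shows "d\<phi> v \<le> d"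
proof -
  have "d\<phi> v \<le> (\<Sum>v'\<in>{v'\<in>V G'. \<phi> v' = \<phi> v}. d\<phi> v')"
    using v finite_V[OF source_graph] by (intro member_le_sum) auto
  then show ?thesis using assms vertex_image[OF v] by (simp add: has_degree_def)
qed

lemma le_degree:
  assumes "has_degree G' G \<phi> d\<phi> d" and x: "x \<in> X G'"
  shows "d\<phi> x \<le> d"
proof (cases "x \<in> V G'")
  case True
  then show ?thesis using vertex_le_degree[OF assms(1)] by simp
next
  case False
  then have "x \<in> H G'" using x by (simp add: H_def)
  then show ?thesis
    using half_edge_le_root vertex_le_degree[OF assms(1) r_in_V[OF x]] le_trans by blast
qed

lemma card_V_le:
  assumes deg: "has_degree G' G \<phi> d\<phi> d" and pos: "\<forall>v\<in>V G'. 0 < d\<phi> v"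
  shows "card (V G') \<le> card (V G) * d"
proof -
  have fibre: "card {v'\<in>V G'. \<phi> v' = w} \<le> d" if w: "w \<in> V G" for w
  proof -
    have "card {v'\<in>V G'. \<phi> v' = w} \<le> (\<Sum>v'\<in>{v'\<in>V G'. \<phi> v' = w}. d\<phi> v')"
      using pos by (intro card_le_sum_pos) auto
    then show ?thesis using deg w by (simp add: has_degree_def)
  qed
  have "V G' = (\<Union>w\<in>V G. {v'\<in>V G'. \<phi> v' = w})" using vertex_image by auto
  then have "card (V G') = card (\<Union>w\<in>V G. {v'\<in>V G'. \<phi> v' = w})"
    by (rule arg_cong)
  also have "\<dots> \<le> (\<Sum>w\<in>V G. card {v'\<in>V G'. \<phi> v' = w})"
    by (rule card_UN_le[OF finite_V[OF target_graph]])
  also have "\<dots> \<le> card (V G) * d"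
    using sum_bounded_above[of "V G" "\<lambda>w. card {v'\<in>V G'. \<phi> v' = w}" d] fibre by simp
  finally show ?thesis .
qed

lemma card_H_le:
  assumes fm: "finite_morph G' d\<phi>" and deg: "has_degree G' G \<phi> d\<phi> d"
  shows "card (H G') \<le> card (V G') * (card (H G) * d)"
proof -
  have "card (H G') \<le> (\<Sum>v\<in>V G'. card (T G' v))"
    using card_UN_le[OF finite_V[OF source_graph]] by (simp add: H_eq_UN_T[of G'])
  also have "\<dots> \<le> (\<Sum>v\<in>V G'. card (H G) * d)"
  proof (rule sum_mono)
    fix v assume v: "v \<in> V G'"
    have "card (T G' v) \<le> val G (\<phi> v) * d\<phi> v" by (rule card_T_le[OF fm v])
    also have "\<dots> \<le> card (H G) * d"
      using val_le_card_H[OF target_graph] vertex_le_degree[OF deg v] by (rule mult_le_mono)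
    finally show "card (T G' v) \<le> card (H G) * d" .
  qed
  finally show ?thesis by simp
qed

text \<open>A vertex without half-edges is, by connectedness, the only vertex of G', so it alone
  carries the whole degree.\<close>

lemma vertex_degree_pos:
  assumes conn: "connected G'" and fm: "finite_morph G' d\<phi>"
    and deg: "has_degree G' G \<phi> d\<phi> d" and "0 < d" and v: "v \<in> V G'"
  shows "0 < d\<phi> v"
proof (cases "T G' v = {}")
  case False
  then obtain h where h: "h \<in> H G'" "r G' h = v" by (auto simp: T_def)
  have "0 < d\<phi> h" using fm h(1) by (simp add: finite_morph_def)
  also have "\<dots> \<le> d\<phi> v" using half_edge_le_root[OF h(1)] h(2) by simp
  finally show ?thesis .
next
  case True
  have only_vertex: "w = v" if w: "w \<in> V G'" for w
  proof -
    have "(v, w) \<in> (adj G')\<^sup>*" using conn v w by (simp add: connected_def)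
    then show ?thesis
    proof (cases rule: converse_rtranclE)
      case (step u)
      then obtain h where "h \<in> H G'" "r G' h = v" unfolding adj_def by blast
      then show ?thesis using True by (auto simp: T_def)
    qed simp
  qed
  then have "{v'\<in>V G'. \<phi> v' = \<phi> v} = {v}" using v by blast
  moreover have "(\<Sum>v'\<in>{v'\<in>V G'. \<phi> v' = \<phi> v}. d\<phi> v') = d"
    using deg vertex_image[OF v] unfolding has_degree_def by blast
  ultimately show ?thesis using \<open>0 < d\<close> by simp
qed

end

subsection \<open>Unramified coverings\<close>

lemma unramified_genus_le:
  fixes G' :: "('b, 'y) wgraph_scheme" and G :: "('a, 'z) wgraph_scheme"
  assumes "unramified G' G \<phi> d\<phi>" and "v \<in> V G'"
  shows "genus G' v \<le> 1 + d\<phi> v * (genus G (\<phi> v) + val G (\<phi> v))"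
proof -
  have "int (d\<phi> v) * chi G (\<phi> v) = chi G' v"
    using assms by (simp add: unramified_def)
  then have "2 * int (genus G' v) \<le> 2 + int (d\<phi> v) * (2 * int (genus G (\<phi> v)) + int (val G (\<phi> v)))"
    by (simp add: chi_def algebra_simps)
  also have "\<dots> \<le> 2 + 2 * (int (d\<phi> v) * (int (genus G (\<phi> v)) + int (val G (\<phi> v))))"
    by (simp add: algebra_simps)
  finally have "int (genus G' v) \<le> int (1 + d\<phi> v * (genus G (\<phi> v) + val G (\<phi> v)))"
    by simp
  then show ?thesis by (simp only: of_nat_le_iff)
qed

definition bounded_codes :: "nat \<Rightarrow> 'a set \<Rightarrow> nat \<Rightarrow> nat \<Rightarrow> (nat \<times> nat \<times> 'a \<times> nat \<times> nat) list set" where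
  "bounded_codes n A k g = {c. set c \<subseteq> {0..<n} \<times> {0..<n} \<times> A \<times> {..k} \<times> {..g} \<and> length c \<le> n}"

lemma finite_bounded_codes: "finite A \<Longrightarrow> finite (bounded_codes n A k g)"
  unfolding bounded_codes_def by (intro finite_lists_length_le) simp

locale unramified_cover = harmonic_morphism G' G \<phi> d\<phi>
  for G' :: "('b, 'y) wgraph_scheme" and G :: "('a, 'z) wgraph_scheme" and \<phi> d\<phi> +
  fixes d :: nat
  assumes connected_source: "connected G'" and is_unramified: "unramified G' G \<phi> d\<phi>"
    and degree: "has_degree G' G \<phi> d\<phi> d" and degree_pos: "0 < d"
begin

lemma is_finite_morph: "finite_morph G' d\<phi>"
  using is_unramified by (simp add: unramified_def)

lemma card_X_le: "card (X G') \<le> card (V G) * d * (1 + card (H G) * d)"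
proof -
  have "card (X G') \<le> card (V G') + card (H G')"
    using X_eq_V_Un_H[OF source_graph] card_Un_le by metis
  also have "\<dots> \<le> card (V G') * (1 + card (H G) * d)"
    using card_H_le[OF is_finite_morph degree] by simp
  also have "\<dots> \<le> card (V G) * d * (1 + card (H G) * d)"
    using vertex_degree_pos[OF connected_source is_finite_morph degree degree_pos]
    by (intro mult_le_mono1 card_V_le[OF degree]) blast
  finally show ?thesis .
qed

lemma genus_le:
  assumes v: "v \<in> V G'"
  shows "genus G' v \<le> 1 + d * (sum (genus G) (V G) + card (H G))"
proof -
  have "genus G (\<phi> v) + val G (\<phi> v) \<le> sum (genus G) (V G) + card (H G)"
    using vertex_image[OF v] finite_V[OF target_graph] val_le_card_H[OF target_graph]
    by (intro add_mono member_le_sum) auto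
  then have "d\<phi> v * (genus G (\<phi> v) + val G (\<phi> v)) \<le> d * (sum (genus G) (V G) + card (H G))"
    using vertex_le_degree[OF degree v] by (rule mult_le_mono[rotated])
  then show ?thesis using unramified_genus_le[OF is_unramified v] by linarith
qed

lemma morphism_code_bounded:
  "morphism_code G' \<phi> d\<phi> \<in> bounded_codes (card (V G) * d * (1 + card (H G) * d)) (X G) d
     (1 + d * (sum (genus G) (V G) + card (H G)))"
proof -
  have "{0..<card (X G')} \<subseteq> {0..<card (V G) * d * (1 + card (H G) * d)}"
    using card_X_le by auto
  moreover have "\<phi> ` X G' \<subseteq> X G" using is_morphism by (auto simp: morphism_def)
  moreover have "d\<phi> ` X G' \<subseteq> {..d}" using le_degree[OF degree] by auto
  moreover have "insert 0 (genus G' ` V G') \<subseteq> {..1 + d * (sum (genus G) (V G) + card (H G))}"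
    using genus_le by auto
  ultimately show ?thesis
    unfolding bounded_codes_def length_morphism_code mem_Collect_eq
    using card_X_le by (intro conjI order_trans[OF set_morphism_code[OF source_graph]] Sigma_mono) auto
qed

end

theorem proposition2p21:
  fixes G :: "'a wgraph" and d :: nat
  assumes "is_graph G" and "connected G" and "0 < d"
  shows "\<exists>S :: ('b wgraph \<times> ('b \<Rightarrow> 'a) \<times> ('b \<Rightarrow> nat)) set. finite S \<and>
           (\<forall>(G' :: 'b wgraph) \<phi> d\<phi>.
              is_graph G' \<and> connected G' \<and> harmonic G' G \<phi> d\<phi> \<and>
              unramified G' G \<phi> d\<phi> \<and> has_degree G' G \<phi> d\<phi> d \<longrightarrow>
              (\<exists>(G2, \<phi>2, d2) \<in> S. iso_over G' \<phi> d\<phi> G2 \<phi>2 d2))"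
proof -
  define N where "N = card (V G) * d * (1 + card (H G) * d)"
  define B where "B = 1 + d * (sum (genus G) (V G) + card (H G))"
  have "finite (bounded_codes N (X G) d B)"
    using assms(1) by (simp add: finite_bounded_codes is_graph_finite)
  then show ?thesis
  proof (rule finite_representatives_triples[where f = morphism_code])
    fix G' :: "'b wgraph" and \<phi> d\<phi>
    assume "is_graph G' \<and> connected G' \<and> harmonic G' G \<phi> d\<phi> \<and>
      unramified G' G \<phi> d\<phi> \<and> has_degree G' G \<phi> d\<phi> d"
    then interpret unramified_cover G' G \<phi> d\<phi> d
      using assms by unfold_locales auto
    show "morphism_code G' \<phi> d\<phi> \<in> bounded_codes N (X G) d B"
      unfolding N_def B_def by (rule morphism_code_bounded)
  qed (use morphism_code_eq_imp_iso_over in blast)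
qed

end
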